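(* Let $(X,w)$ be a weighted system in a real Euclidean affine space. Then $\mu_1$ is identically $\overrightarrow{O}$ if and only if $\mu_0=0$ and $\sum_{z\in X}w(z)\left(\overrightarrow{xy}^2-\overrightarrow{yz}^2+\overrightarrow{zx}^2\right)=0$ for every $x,y\in X$.
   Context: A weighted system is a finite set $X$ of points with $w:X\to\mathbb{R}$. $\mu_0=\sum_xw(x)$, $\mu_1(p)=\sum_xw(x)\overrightarrow{px}$; the square of a vector is its inner product with itself. *)

theory Defs
  imports "HOL-Analysis.Analysis"
begin

text \<open>A real Euclidean affine space is modelled by a Euclidean space 'a, acting on itself
by translation; the vector from p to x is x - p, and the square of a vector v is v \<bullet> v.\<close>

definition vec :: "'a::real_vector \<Rightarrow> 'a \<Rightarrow> 'a" where
  "vec p x = x - p"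

definition mu0 :: "'a set \<Rightarrow> ('a \<Rightarrow> real) \<Rightarrow> real" where
  "mu0 X w = (\<Sum>x\<in>X. w x)"

definition mu1 :: "'a::real_vector set \<Rightarrow> ('a \<Rightarrow> real) \<Rightarrow> 'a \<Rightarrow> 'a" where
  "mu1 X w p = (\<Sum>x\<in>X. w x *\<^sub>R vec p x)"

end

theory Submission
  imports Defs
begin

text \<open>Since \<open>\<mu>\<^sub>1(p) = (\<Sum>z. w(z) z) - \<mu>\<^sub>0 p\<close>, the first moment is independent of \<open>p\<close>
  exactly when \<open>\<mu>\<^sub>0 = 0\<close>, and then it vanishes identically iff it vanishes at one point of \<open>X\<close>.
  By the law of cosines the weighted sum in the statement equals \<open>2 (y - x) \<bullet> \<mu>\<^sub>1(x)\<close>; as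
  \<open>\<mu>\<^sub>1(x)\<close> is itself a combination of the vectors \<open>y - x\<close> with \<open>y \<in> X\<close>, it is zero iff it is
  orthogonal to all of them.\<close>

lemma mu1_eq: "mu1 X w p = (\<Sum>z\<in>X. w z *\<^sub>R z) - mu0 X w *\<^sub>R p"
  unfolding mu1_def mu0_def vec_def
  by (simp add: scaleR_diff_right sum_subtractf scaleR_sum_left)

lemma mu1_diff: "mu1 X w p - mu1 X w q = mu0 X w *\<^sub>R (q - p)"
  by (simp add: mu1_eq scaleR_diff_right)

lemma mu1_identically_zero_iff:
  fixes X :: "'a::euclidean_space set"
  assumes "a \<in> A"
  shows "(\<forall>p. mu1 X w p = 0) \<longleftrightarrow> mu0 X w = 0 \<and> (\<forall>x\<in>A. mu1 X w x = 0)"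
proof
  assume zero: "\<forall>p. mu1 X w p = 0"
  obtain b :: 'a where "b \<in> Basis"
    using nonempty_Basis by blast
  then have "b \<noteq> 0"
    by (simp add: nonzero_Basis)
  moreover have "mu0 X w *\<^sub>R b = 0"
    using mu1_diff[of X w 0 b] zero by simp
  ultimately show "mu0 X w = 0 \<and> (\<forall>x\<in>A. mu1 X w x = 0)"
    using zero by simp
next
  assume "mu0 X w = 0 \<and> (\<forall>x\<in>A. mu1 X w x = 0)"
  then show "\<forall>p. mu1 X w p = 0"
    using mu1_diff[of X w _ a] assms by simp
qed

lemma law_of_cosines:
  fixes x y z :: "'a::real_inner"
  shows "vec x y \<bullet> vec x y - vec y z \<bullet> vec y z + vec z x \<bullet> vec z x = 2 * (vec x y \<bullet> vec x z)"
  unfolding vec_def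
  by (simp add: inner_diff_left inner_diff_right inner_commute[of x y] inner_commute[of x z]
      inner_commute[of y z] algebra_simps)

lemma inner_mu1_right: "v \<bullet> mu1 X w p = (\<Sum>z\<in>X. w z * (v \<bullet> vec p z))"
  unfolding mu1_def by (simp add: inner_sum_right)

lemma weighted_cosine_sum_eq:
  fixes x y :: "'a::real_inner"
  shows "(\<Sum>z\<in>X. w z * (vec x y \<bullet> vec x y - vec y z \<bullet> vec y z + vec z x \<bullet> vec z x))
     = 2 * (vec x y \<bullet> mu1 X w x)"
  by (simp add: law_of_cosines inner_mu1_right sum_distrib_left mult.left_commute)

lemma mu1_eq_0_iff_orthogonal:
  fixes p :: "'a::real_inner"
  shows "mu1 X w p = 0 \<longleftrightarrow> (\<forall>y\<in>X. vec p y \<bullet> mu1 X w p = 0)"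
proof
  assume "\<forall>y\<in>X. vec p y \<bullet> mu1 X w p = 0"
  then have "mu1 X w p \<bullet> mu1 X w p = 0"
    by (simp add: mu1_def inner_sum_left inner_commute)
  then show "mu1 X w p = 0"
    by simp
qed simp

lemma weighted_cosine_sums_vanish_iff:
  fixes X :: "'a::real_inner set"
  shows "(\<forall>x\<in>X. \<forall>y\<in>X. (\<Sum>z\<in>X. w z * (vec x y \<bullet> vec x y - vec y z \<bullet> vec y z + vec z x \<bullet> vec z x)) = 0)
     \<longleftrightarrow> (\<forall>x\<in>X. mu1 X w x = 0)"
  using mu1_eq_0_iff_orthogonal[of X w] by (simp add: weighted_cosine_sum_eq)

theorem corollary2p6:
  fixes X :: "'a::euclidean_space set" and w :: "'a \<Rightarrow> real"
  assumes "finite X"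
  shows "(\<forall>p. mu1 X w p = 0) \<longleftrightarrow>
    (mu0 X w = 0 \<and>
     (\<forall>x\<in>X. \<forall>y\<in>X. (\<Sum>z\<in>X. w z * (vec x y \<bullet> vec x y - vec y z \<bullet> vec y z + vec z x \<bullet> vec z x)) = 0))"
proof (cases "X = {}")
  case True
  then show ?thesis
    by (simp add: mu0_def mu1_def)
next
  case False
  then obtain a where "a \<in> X"
    by blast
  then show ?thesis
    by (simp add: mu1_identically_zero_iff weighted_cosine_sums_vanish_iff)
qed

end
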